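(* Let $G=(V,E)$ be a finite simple graph and $e\in E$. Let $G-e$ denote the graph obtained from $G$ by removing the edge $e$ (keeping all vertices). Then $$\gamma_{coe}(G)-2\leq \gamma_{coe}(G-e)\leq \gamma_{coe}(G)+2.$$
   Context: All graphs are finite and simple. For a graph $G=(V,E)$ and $v\in V$, $\deg(v)$ is the number of neighbours of $v$. A set $D\subseteq V$ is a dominating set if every vertex of $V\setminus D$ is adjacent to at least one vertex of $D$. A dominating set $D$ is a co-even dominating set if $\deg(v)$ is even for every $v\in V\setminus D$ (degrees taken in the graph under consideration). The co-even domination number $\gamma_{coe}(G)$ is the minimum cardinality of a co-even dominating set of $G$. *)

theory Defs
  imports Main
begin

definition simple_graph :: "'a set \<Rightarrow> 'a set set \<Rightarrow> bool" where
  "simple_graph V E \<longleftrightarrow> finite V \<and>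
     (\<forall>e\<in>E. \<exists>u v. e = {u, v} \<and> u \<noteq> v \<and> u \<in> V \<and> v \<in> V)"

definition neighbours :: "'a set \<Rightarrow> 'a set set \<Rightarrow> 'a \<Rightarrow> 'a set" where
  "neighbours V E v = {u \<in> V. {u, v} \<in> E}"

definition degree :: "'a set \<Rightarrow> 'a set set \<Rightarrow> 'a \<Rightarrow> nat" where
  "degree V E v = card (neighbours V E v)"

definition dominating_set :: "'a set \<Rightarrow> 'a set set \<Rightarrow> 'a set \<Rightarrow> bool" where
  "dominating_set V E D \<longleftrightarrow> D \<subseteq> V \<and>
     (\<forall>v \<in> V - D. \<exists>u \<in> D. {u, v} \<in> E)"

definition co_even_dominating_set :: "'a set \<Rightarrow> 'a set set \<Rightarrow> 'a set \<Rightarrow> bool" where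
  "co_even_dominating_set V E D \<longleftrightarrow> dominating_set V E D \<and>
     (\<forall>v \<in> V - D. even (degree V E v))"

text \<open>Minimum cardinality of a co-even dominating set (V itself always is one).\<close>
definition gamma_coe :: "'a set \<Rightarrow> 'a set set \<Rightarrow> nat" where
  "gamma_coe V E = Min (card ` {D. co_even_dominating_set V E D})"

end

theory Submission
  imports Defs
begin

(* Changing the graph only at the pair {u, v} leaves the neighbourhood of every other vertex
   unchanged. Hence adding u and v to a co-even dominating set of one graph yields one of the
   other: every vertex outside the enlarged set is outside {u, v}, so it keeps its dominator and
   its even degree. Applying this in both directions to G and G - e gives the two bounds. *)

lemma co_even_dominating_set_subset:
  "co_even_dominating_set V E D \<Longrightarrow> D \<subseteq> V"
  by (simp add: co_even_dominating_set_def dominating_set_def)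

lemma co_even_dominating_set_vertices: "co_even_dominating_set V E V"
  by (simp add: co_even_dominating_set_def dominating_set_def)

lemma finite_card_co_even_dominating_sets:
  assumes "finite V"
  shows "finite (card ` {D. co_even_dominating_set V E D})"
proof -
  have "{D. co_even_dominating_set V E D} \<subseteq> Pow V"
    using co_even_dominating_set_subset by blast
  then show ?thesis
    using assms by (meson finite_Pow_iff finite_imageI finite_subset)
qed

lemma gamma_coe_le_card:
  assumes "finite V" and "co_even_dominating_set V E D"
  shows "gamma_coe V E \<le> card D"
  unfolding gamma_coe_def
  using assms finite_card_co_even_dominating_sets[OF assms(1)] by (intro Min_le) auto

lemma gamma_coe_attained:
  assumes "finite V"
  obtains D where "co_even_dominating_set V E D" and "card D = gamma_coe V E"
proof -
  have "gamma_coe V E \<in> card ` {D. co_even_dominating_set V E D}"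
    unfolding gamma_coe_def
    using finite_card_co_even_dominating_sets[OF assms] co_even_dominating_set_vertices[of V E]
    by (intro Min_in) auto
  then show ?thesis
    using that by auto
qed

lemma co_even_dominating_set_insert_pair:
  assumes edges: "E1 - {{u, v}} = E2 - {{u, v}}"
    and "u \<in> V" and "v \<in> V"
    and D: "co_even_dominating_set V E1 D"
  shows "co_even_dominating_set V E2 (D \<union> {u, v})"
proof -
  have same_edge: "{w, x} \<in> E1 \<longleftrightarrow> {w, x} \<in> E2" if "x \<notin> {u, v}" for w x
  proof -
    have "{w, x} \<noteq> {u, v}"
      using that by (auto simp: doubleton_eq_iff)
    then show ?thesis
      using edges by blast
  qed
  have same_degree: "degree V E1 x = degree V E2 x" if "x \<notin> {u, v}" for x
    using same_edge[OF that] by (simp add: degree_def neighbours_def)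
  have "D \<union> {u, v} \<subseteq> V"
    using co_even_dominating_set_subset[OF D] \<open>u \<in> V\<close> \<open>v \<in> V\<close> by blast
  moreover have "\<exists>w \<in> D \<union> {u, v}. {w, x} \<in> E2 \<and> even (degree V E2 x)"
    if "x \<in> V - (D \<union> {u, v})" for x
  proof -
    have "x \<in> V - D"
      using that by blast
    with D obtain w where "w \<in> D" "{w, x} \<in> E1" "even (degree V E1 x)"
      unfolding co_even_dominating_set_def dominating_set_def by blast
    moreover have "x \<notin> {u, v}"
      using that by blast
    ultimately show ?thesis
      using same_edge[of x w] same_degree[of x] by auto
  qed
  ultimately show ?thesis
    unfolding co_even_dominating_set_def dominating_set_def by auto
qed

lemma gamma_coe_le_plus_2:
  assumes "finite V" and "E1 - {{u, v}} = E2 - {{u, v}}" and "u \<in> V" and "v \<in> V"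
  shows "gamma_coe V E2 \<le> gamma_coe V E1 + 2"
proof -
  obtain D where D: "co_even_dominating_set V E1 D" and card_D: "card D = gamma_coe V E1"
    using gamma_coe_attained[OF assms(1)] .
  have "gamma_coe V E2 \<le> card (D \<union> {u, v})"
    using gamma_coe_le_card[OF assms(1) co_even_dominating_set_insert_pair[OF assms(2-4) D]] .
  also have "\<dots> \<le> card D + card {u, v}"
    by (rule card_Un_le)
  also have "\<dots> \<le> card D + 2"
    by (simp add: card_insert_le_m1)
  finally show ?thesis
    using card_D by simp
qed

theorem mainTheorem3:
  fixes V :: "'a set" and E :: "'a set set" and e :: "'a set"
  assumes "simple_graph V E"
    and "e \<in> E"
  shows "int (gamma_coe V E) - 2 \<le> int (gamma_coe V (E - {e}))
         \<and> int (gamma_coe V (E - {e})) \<le> int (gamma_coe V E) + 2"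
proof -
  obtain u v where e: "e = {u, v}" and "u \<in> V" "v \<in> V" and "finite V"
    using assms unfolding simple_graph_def by blast
  have "gamma_coe V (E - {e}) \<le> gamma_coe V E + 2"
    using gamma_coe_le_plus_2[of V E u v "E - {e}"] e \<open>u \<in> V\<close> \<open>v \<in> V\<close> \<open>finite V\<close> by auto
  moreover have "gamma_coe V E \<le> gamma_coe V (E - {e}) + 2"
    using gamma_coe_le_plus_2[of V "E - {e}" u v E] e \<open>u \<in> V\<close> \<open>v \<in> V\<close> \<open>finite V\<close> by auto
  ultimately show ?thesis
    by linarith
qed

end
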